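(* Let $f:\mathbb{T}\to\mathbb{R}$ be a real analytic function that is not a trigonometric polynomial, with Fourier expansion $f(x)=\sum_{k\in\mathbb{Z}}a_ke^{2\pi ikx}$, and for $n\ge1$ put $T_n=\sum_{j\ge2}|a_{jn}|\,|jn|$. Then there exists a subsequence $(a_{l_k})_{k\ge1}$ of the Fourier coefficients (with $l_k$ a strictly increasing sequence of positive integers) such that $\left|\frac{a_{l_k}}{T_{l_k}}\right|\to\infty$ as $k\to\infty$.
   Context: $\mathbb{T}=\mathbb{R}/\mathbb{Z}$. *)

theory Defs
  imports "HOL-Analysis.Analysis"
begin

text \<open>Functions on the circle T = R/Z are represented as 1-periodic functions on R.\<close>
definition periodic1 :: "(real \<Rightarrow> real) \<Rightarrow> bool" where
  "periodic1 f \<longleftrightarrow> (\<forall>x. f (x + 1) = f x)"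

definition real_analytic :: "(real \<Rightarrow> real) \<Rightarrow> bool" where
  "real_analytic f \<longleftrightarrow>
     (\<forall>x. \<exists>r>0. \<exists>c :: nat \<Rightarrow> real.
        \<forall>y. \<bar>y - x\<bar> < r \<longrightarrow> (\<lambda>n. c n * (y - x) ^ n) sums f y)"

definition fourier_coeff :: "(real \<Rightarrow> real) \<Rightarrow> int \<Rightarrow> complex" where
  "fourier_coeff f k =
     integral {0..1} (\<lambda>x. complex_of_real (f x) * cis (- 2 * pi * real_of_int k * x))"

definition trig_poly :: "(real \<Rightarrow> real) \<Rightarrow> bool" where
  "trig_poly f \<longleftrightarrow>
     (\<exists>N::nat. \<exists>c :: int \<Rightarrow> complex. \<forall>x.
        complex_of_real (f x) = (\<Sum>k\<in>{-int N..int N}. c k * cis (2 * pi * real_of_int k * x)))"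

definition T_sum :: "(real \<Rightarrow> real) \<Rightarrow> nat \<Rightarrow> real" where
  "T_sum f n = (\<Sum>j. norm (fourier_coeff f (int ((j + 2) * n))) * real ((j + 2) * n))"

end

theory Submission
  imports Defs "HOL-Complex_Analysis.Complex_Analysis"
begin

(* Since f is real analytic, it extends to a holomorphic function F on a neighbourhood
   of the real line, and F(z + 1) = F(z) near the real axis. Moving the segment of integration
   of the Fourier integral down to Im z = -eta therefore gives |a_k| <= B q^k with q < 1.
   Since f is not a trigonometric polynomial, uniqueness of Fourier coefficients gives a_k <> 0 for
   infinitely many k > 0. With rho = sqrt q, the ratios |a_k| / rho^k tend to 0, so beyond any N
   some index n maximises them; then |a_(jn)| <= |a_n| rho^((j-1)n) and hence
   T_n <= 4 n rho^n |a_n| = o(|a_n|). Choosing such n with larger and larger required ratios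
   gives the subsequence. *)

section \<open>Selecting the subsequence\<close>

definition weighted_multiples_sum :: "(nat \<Rightarrow> real) \<Rightarrow> nat \<Rightarrow> real" where
  "weighted_multiples_sum a n = (\<Sum>j. a ((j + 2) * n) * real ((j + 2) * n))"

lemma weighted_multiples_sum_le:
  fixes a :: "nat \<Rightarrow> real"
  assumes nonneg: "\<And>k. 0 \<le> a k" and le: "\<And>k. n \<le> k \<Longrightarrow> a k \<le> A * \<rho> ^ k"
    and "0 < \<rho>" "\<rho> ^ n \<le> 1/4" "0 < n"
  shows "summable (\<lambda>j. a ((j + 2) * n) * real ((j + 2) * n))"
    and "weighted_multiples_sum a n \<le> 4 * A * real n * \<rho> ^ (2 * n)"
    and "0 \<le> weighted_multiples_sum a n"
proof -
  define x where "x = 2 * \<rho> ^ n"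
  have x: "0 \<le> x" "x \<le> 1/2" using assms by (auto simp: x_def)
  have "0 \<le> A * \<rho> ^ n" using nonneg[of n] le[of n] by linarith
  then have A: "0 \<le> A" using \<open>0 < \<rho>\<close> by (meson zero_le_mult_iff zero_less_power not_le)
  have two_pow: "real (j + 2) \<le> 2 ^ (j + 1)" for j :: nat
    by (induction j) simp_all
  \<comment> \<open>since \<open>j + 2 \<le> 2 ^ (j + 1)\<close>, the terms are dominated by a geometric series of ratio \<open>x\<close>\<close>
  have term_le: "a ((j + 2) * n) * real ((j + 2) * n) \<le> (A * real n * \<rho> ^ n) * x ^ (j + 1)" for j
  proof -
    have "a ((j + 2) * n) \<le> A * \<rho> ^ ((j + 2) * n)" using le by simp
    then have "a ((j + 2) * n) * real ((j + 2) * n) \<le> A * \<rho> ^ ((j + 2) * n) * (real (j + 2) * real n)"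
      unfolding of_nat_mult using nonneg A \<open>0 < \<rho>\<close> by (intro mult_mono) auto
    also have "\<dots> \<le> A * \<rho> ^ ((j + 2) * n) * (2 ^ (j + 1) * real n)"
      using A \<open>0 < \<rho>\<close> two_pow by (intro mult_left_mono mult_right_mono) auto
    also have "\<dots> = (A * real n * \<rho> ^ n) * x ^ (j + 1)"
      by (simp add: x_def power_mult_distrib flip: power_mult power_add) (simp add: algebra_simps)
    finally show ?thesis .
  qed
  have geom: "(\<lambda>j. (A * real n * \<rho> ^ n) * x ^ (j + 1)) sums ((A * real n * \<rho> ^ n) * (x / (1 - x)))"
    using sums_mult[OF geometric_sums[of x], of x] x
    by (intro sums_mult) (simp add: mult.commute)
  show sm: "summable (\<lambda>j. a ((j + 2) * n) * real ((j + 2) * n))"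
    using nonneg term_le by (intro summable_comparison_test'[OF sums_summable[OF geom]]) auto
  have "weighted_multiples_sum a n \<le> (A * real n * \<rho> ^ n) * (x / (1 - x))"
    unfolding weighted_multiples_sum_def by (rule sums_le[OF term_le summable_sums[OF sm] geom])
  also have "\<dots> \<le> (A * real n * \<rho> ^ n) * (2 * x)"
  proof (rule mult_left_mono)
    have "1 / (1 - x) \<le> 2" using x by (simp add: field_simps)
    from mult_left_mono[OF this x(1)] show "x / (1 - x) \<le> 2 * x" by (simp add: mult.commute)
  qed (use A \<open>0 < \<rho>\<close> in simp)
  also have "\<dots> = 4 * A * real n * \<rho> ^ (2 * n)"
    by (simp add: x_def power_mult power2_eq_square power_mult_distrib)
  finally show "weighted_multiples_sum a n \<le> 4 * A * real n * \<rho> ^ (2 * n)" .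
  show "0 \<le> weighted_multiples_sum a n"
    unfolding weighted_multiples_sum_def using sm by (rule suminf_nonneg) (simp add: nonneg)
qed

lemma exists_maximal_term_beyond:
  fixes b :: "nat \<Rightarrow> real"
  assumes "b \<longlonglongrightarrow> 0" "N \<le> k\<^sub>0" "0 < b k\<^sub>0"
  shows "\<exists>n\<ge>N. 0 < b n \<and> (\<forall>k\<ge>N. b k \<le> b n)"
proof -
  obtain K where K: "\<And>k. K \<le> k \<Longrightarrow> b k < b k\<^sub>0"
    using order_tendstoD(2)[OF assms(1,3)] unfolding eventually_sequentially by blast
  define S where "S = {N..max K k\<^sub>0}"
  have "finite S" "k\<^sub>0 \<in> S" using assms(2) by (auto simp: S_def)
  then obtain n where n: "n \<in> S" "\<And>k. k \<in> S \<Longrightarrow> b k \<le> b n"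
    using Max_in[of "b ` S"] Max_ge[of "b ` S"] by (metis empty_iff finite_imageI image_iff)
  have "b k \<le> b n" if "N \<le> k" for k
    using K[of k] n(2)[of k] n(2)[OF \<open>k\<^sub>0 \<in> S\<close>] that by (force simp: S_def)
  then show ?thesis using n(1) n(2)[OF \<open>k\<^sub>0 \<in> S\<close>] assms(3) by (auto simp: S_def)
qed

lemma exists_geometric_record_index:
  fixes a :: "nat \<Rightarrow> real"
  assumes nonneg: "\<And>k. 0 \<le> a k" and decay: "\<And>k. a k \<le> C * (\<rho>\<^sup>2) ^ k" and \<rho>: "0 < \<rho>" "\<rho> < 1"
    and "N \<le> k\<^sub>0" "a k\<^sub>0 \<noteq> 0"
  shows "\<exists>n\<ge>N. 0 < a n \<and> (\<forall>k\<ge>n. a k \<le> a n / \<rho> ^ n * \<rho> ^ k)"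
proof -
  define b where "b k = a k / \<rho> ^ k" for k
  have b_le: "b k \<le> C * \<rho> ^ k" for k
  proof -
    have "a k \<le> C * \<rho> ^ k * \<rho> ^ k"
      using decay[of k] by (simp add: power2_eq_square power_mult_distrib mult.assoc)
    then show ?thesis using \<rho>(1) by (simp add: b_def pos_divide_le_eq)
  qed
  have b_nonneg: "0 \<le> b k" for k using nonneg[of k] \<rho>(1) by (simp add: b_def)
  have "b \<longlonglongrightarrow> 0"
  proof (rule tendsto_sandwich[of "\<lambda>_. 0" b sequentially "\<lambda>k. C * \<rho> ^ k"])
    show "eventually (\<lambda>k. 0 \<le> b k) sequentially" by (simp add: b_nonneg)
    show "eventually (\<lambda>k. b k \<le> C * \<rho> ^ k) sequentially" by (simp add: b_le)
    have "(\<lambda>k. \<rho> ^ k) \<longlonglongrightarrow> 0" by (rule LIMSEQ_power_zero) (use \<rho> in simp)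
    then show "(\<lambda>k. C * \<rho> ^ k) \<longlonglongrightarrow> 0" by (rule tendsto_mult_right_zero)
  qed simp
  moreover have "0 < b k\<^sub>0"
  proof -
    have "0 < a k\<^sub>0" by (rule order.not_eq_order_implies_strict) (use assms(6) nonneg in auto)
    then show ?thesis using \<rho>(1) by (simp add: b_def)
  qed
  ultimately have "\<exists>n\<ge>N. 0 < b n \<and> (\<forall>k\<ge>N. b k \<le> b n)"
    by (rule exists_maximal_term_beyond[OF _ \<open>N \<le> k\<^sub>0\<close>])
  then obtain n where n: "N \<le> n" "0 < b n" "\<forall>k\<ge>N. b k \<le> b n" by blast
  have "a k \<le> a n / \<rho> ^ n * \<rho> ^ k" if "n \<le> k" for k
  proof -
    have "b k \<le> b n" using n(1,3) that by simp
    then show ?thesis using \<rho>(1) by (simp add: b_def field_simps)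
  qed
  moreover have "0 < a n" using n(2) \<rho>(1) by (simp add: b_def zero_less_divide_iff)
  ultimately show ?thesis using n(1) by blast
qed

lemma exists_index_dominating_multiples:
  fixes a :: "nat \<Rightarrow> real"
  assumes nonneg: "\<And>k. 0 \<le> a k" and decay: "\<And>k. a k \<le> C * q ^ k" and "0 < q" "q < 1"
    and nonzero: "\<And>N. \<exists>k>N. a k \<noteq> 0"
  shows "\<exists>n\<ge>N. 0 < n \<and> M * weighted_multiples_sum a n < a n \<and> 0 \<le> weighted_multiples_sum a n"
proof -
  define \<rho> where "\<rho> = sqrt q"
  have \<rho>: "0 < \<rho>" "\<rho> < 1" "q = \<rho>\<^sup>2" using \<open>0 < q\<close> \<open>q < 1\<close> by (auto simp: \<rho>_def)
  have "(\<lambda>n. real n * \<rho> ^ n) \<longlonglongrightarrow> 0" using powser_times_n_limit_0[of \<rho>] \<rho> by simp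
  then have "(\<lambda>n. 4 * max M 0 * (real n * \<rho> ^ n)) \<longlonglongrightarrow> 0" by (rule tendsto_mult_right_zero)
  moreover have "(\<lambda>n. \<rho> ^ n) \<longlonglongrightarrow> 0" by (rule LIMSEQ_power_zero) (use \<rho> in simp)
  ultimately have "eventually (\<lambda>n. \<rho> ^ n < 1/4 \<and> 4 * max M 0 * (real n * \<rho> ^ n) < 1) sequentially"
    by (intro eventually_conj order_tendstoD(2)) auto
  then obtain N\<^sub>1 where N\<^sub>1: "\<And>n. N\<^sub>1 \<le> n \<Longrightarrow> \<rho> ^ n < 1/4 \<and> 4 * max M 0 * (real n * \<rho> ^ n) < 1"
    unfolding eventually_sequentially by blast
  obtain k\<^sub>0 where k\<^sub>0: "max (max N 1) N\<^sub>1 < k\<^sub>0" "a k\<^sub>0 \<noteq> 0" using nonzero by blast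
  have "\<exists>n\<ge>max (max N 1) N\<^sub>1. 0 < a n \<and> (\<forall>k\<ge>n. a k \<le> a n / \<rho> ^ n * \<rho> ^ k)"
    by (rule exists_geometric_record_index[OF nonneg decay[unfolded \<rho>(3)] \<rho>(1,2)
          less_imp_le[OF k\<^sub>0(1)] k\<^sub>0(2)])
  then obtain n where n: "max (max N 1) N\<^sub>1 \<le> n" "0 < a n"
    and a_le: "\<And>k. n \<le> k \<Longrightarrow> a k \<le> a n / \<rho> ^ n * \<rho> ^ k" by blast
  have "N \<le> n" "0 < n" and small: "\<rho> ^ n < 1/4" "4 * max M 0 * (real n * \<rho> ^ n) < 1"
    using n(1) N\<^sub>1 by auto
  note bound = weighted_multiples_sum_le[OF nonneg _ \<rho>(1) less_imp_le[OF small(1)] \<open>0 < n\<close>]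
  have T_le: "weighted_multiples_sum a n \<le> 4 * (a n / \<rho> ^ n) * real n * \<rho> ^ (2 * n)"
    by (rule bound(2)) (rule a_le)
  have T_nonneg: "0 \<le> weighted_multiples_sum a n"
    by (rule bound(3)[where A = "a n / \<rho> ^ n"]) (rule a_le)
  \<comment> \<open>the bound \<open>4 n \<rho>\<^sup>n a\<^sub>n\<close> on the weighted sum is \<open>o(a\<^sub>n)\<close>\<close>
  have "M * weighted_multiples_sum a n \<le> max M 0 * (4 * (a n / \<rho> ^ n) * real n * \<rho> ^ (2 * n))"
    using T_le T_nonneg by (intro mult_mono) auto
  also have "\<dots> = (4 * max M 0 * (real n * \<rho> ^ n)) * a n"
    using \<rho>(1) by (simp add: power_mult power2_eq_square power_mult_distrib)
  also have "\<dots> < 1 * a n" using small(2) n(2) by (intro mult_strict_right_mono)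
  finally show ?thesis using \<open>N \<le> n\<close> \<open>0 < n\<close> T_nonneg by auto
qed

lemma exists_subseq_dominating:
  fixes a T :: "nat \<Rightarrow> real"
  assumes "\<And>M N. \<exists>n\<ge>N. 0 < n \<and> M * T n < a n \<and> 0 \<le> T n"
  shows "\<exists>l. strict_mono l \<and> (\<forall>k. 0 < l k) \<and> (\<forall>M. eventually (\<lambda>k. M * T (l k) < a (l k)) sequentially)"
proof -
  let ?P = "\<lambda>k n. 0 < n \<and> real k * T n < a n \<and> 0 \<le> T n"
  have "\<exists>l. \<forall>k. ?P k (l k) \<and> l k < l (Suc k)"
  proof (rule dependent_nat_choice)
    show "\<exists>n. ?P 0 n" using assms[of 0 0] by auto
    show "\<exists>m. ?P (Suc k) m \<and> n < m" for k n using assms[of "Suc n" "real (Suc k)"] by auto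
  qed
  then obtain l where l: "\<And>k. ?P k (l k)" "\<And>k. l k < l (Suc k)" by blast
  have "eventually (\<lambda>k. M * T (l k) < a (l k)) sequentially" for M
    unfolding eventually_sequentially
  proof (intro exI allI impI)
    fix k assume "nat \<lceil>M\<rceil> \<le> k"
    then have "M * T (l k) \<le> real k * T (l k)" using l(1)[of k] by (intro mult_right_mono) linarith+
    then show "M * T (l k) < a (l k)" using l(1)[of k] by linarith
  qed
  then show ?thesis using l by (auto simp: strict_mono_Suc_iff)
qed

section \<open>Holomorphic extension of a real analytic function\<close>

lemma holomorphic_vanishing_on_reals:
  assumes "h holomorphic_on S" "open S" "connected S" "of_real t\<^sub>0 \<in> S"
    and "\<And>t. of_real t \<in> S \<Longrightarrow> h (of_real t) = 0" "z \<in> S"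
  shows "h z = 0"
proof (rule analytic_continuation[OF assms(1-3) _ assms(4)])
  obtain e where e: "0 < e" "ball (of_real t\<^sub>0) e \<subseteq> S"
    using assms(2,4) open_contains_ball by blast
  show "of_real t\<^sub>0 islimpt (S \<inter> \<real>)"
    unfolding islimpt_approachable
  proof (intro allI impI)
    fix \<epsilon> :: real assume "0 < \<epsilon>"
    define s where "s = min e \<epsilon> / 2"
    have "dist (of_real (t\<^sub>0 + s)) (of_real t\<^sub>0 :: complex) = s" "0 < s" "s < e" "s < \<epsilon>"
      using e(1) \<open>0 < \<epsilon>\<close> by (simp_all add: s_def dist_norm flip: of_real_diff)
    with e(2) show "\<exists>x\<in>S \<inter> \<real>. x \<noteq> of_real t\<^sub>0 \<and> dist x (of_real t\<^sub>0) < \<epsilon>"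
      by (intro bexI[of _ "of_real (t\<^sub>0 + s)"]) (auto simp: dist_commute)
  qed
qed (use assms(5,6) in \<open>auto elim!: Reals_cases\<close>)

lemma dist_of_real_Re_le: "dist (complex_of_real x) (of_real (Re z)) \<le> dist (of_real x) z"
proof -
  have "dist (complex_of_real x) (of_real (Re z)) = \<bar>Re (of_real x - z)\<bar>"
    by (simp add: dist_norm flip: of_real_diff)
  also have "\<dots> \<le> dist (of_real x) z" unfolding dist_norm by (rule abs_Re_le_cmod)
  finally show ?thesis .
qed

definition complex_powser :: "(nat \<Rightarrow> real) \<Rightarrow> real \<Rightarrow> complex \<Rightarrow> complex" where
  "complex_powser c x z = (\<Sum>n. of_real (c n) * (z - of_real x) ^ n)"

locale power_series_expansion =
  fixes f :: "real \<Rightarrow> real" and c :: "nat \<Rightarrow> real" and x r :: real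
  assumes expansion: "\<And>y. \<bar>y - x\<bar> < r \<Longrightarrow> (\<lambda>n. c n * (y - x) ^ n) sums f y"
begin

lemma complex_powser_sums:
  assumes "z \<in> ball (of_real x) r"
  shows "(\<lambda>n. of_real (c n) * (z - of_real x) ^ n) sums complex_powser c x z"
proof -
  define t where "t = (norm (z - of_real x) + r) / 2"
  have t: "norm (z - of_real x) < t" "t < r"
    using assms by (auto simp: t_def dist_norm norm_minus_commute)
  moreover have "\<bar>(x + t) - x\<bar> < r" using t norm_ge_zero[of "z - of_real x"] by linarith
  ultimately have "summable (\<lambda>n. c n * t ^ n)"
    using sums_summable[OF expansion[of "x + t"]] by simp
  then have "summable (\<lambda>n. of_real (c n) * (of_real t :: complex) ^ n)"
    by (simp flip: summable_complex_of_real)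
  then have "summable (\<lambda>n. norm (of_real (c n) * (z - of_real x) ^ n))"
    by (rule powser_insidea) (use t in simp)
  then show ?thesis
    unfolding complex_powser_def by (rule summable_sums[OF summable_norm_cancel])
qed

lemma complex_powser_holomorphic: "complex_powser c x holomorphic_on ball (of_real x) r"
  by (rule power_series_holomorphic[where a="\<lambda>n. of_real (c n)"]) (rule complex_powser_sums)

lemma complex_powser_of_real:
  assumes "\<bar>t - x\<bar> < r"
  shows "complex_powser c x (of_real t) = of_real (f t)"
proof -
  have "(\<lambda>n. of_real (c n * (t - x) ^ n)) sums (of_real (f t) :: complex)"
    using expansion[OF assms] by (rule sums_of_real)
  moreover have "of_real t \<in> ball (of_real x :: complex) r"
    using assms by (simp add: dist_real_def abs_minus_commute)
  ultimately show ?thesis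
    using complex_powser_sums[of "of_real t"] by (simp add: sums_unique2)
qed

end

lemma complex_powser_agree:
  assumes "power_series_expansion f c x r" "power_series_expansion f c' x' r'"
    and z: "z \<in> ball (of_real x) r \<inter> ball (of_real x') r'"
  shows "complex_powser c x z = complex_powser c' x' z"
proof -
  interpret e: power_series_expansion f c x r by fact
  interpret e': power_series_expansion f c' x' r' by fact
  let ?S = "ball (complex_of_real x) r \<inter> ball (of_real x') r'"
  have hol: "(\<lambda>w. complex_powser c x w - complex_powser c' x' w) holomorphic_on ?S"
    using holomorphic_on_subset[OF e.complex_powser_holomorphic, of ?S]
      holomorphic_on_subset[OF e'.complex_powser_holomorphic, of ?S]
    by (intro holomorphic_intros) auto
  have conn: "connected ?S" by (intro convex_connected convex_Int) auto
  have Re_z: "of_real (Re z) \<in> ?S"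
    using z dist_of_real_Re_le[of x z] dist_of_real_Re_le[of x' z] by auto
  have real_0: "complex_powser c x (of_real t) - complex_powser c' x' (of_real t) = 0"
    if "of_real t \<in> ?S" for t
  proof -
    have "\<bar>t - x\<bar> < r" "\<bar>t - x'\<bar> < r'" using that by (simp_all add: dist_real_def abs_minus_commute)
    then show ?thesis using e.complex_powser_of_real e'.complex_powser_of_real by simp
  qed
  have "complex_powser c x z - complex_powser c' x' z = 0"
    using holomorphic_vanishing_on_reals[OF hol _ conn Re_z real_0 z] by blast
  then show ?thesis by simp
qed

lemma real_analytic_holomorphic_extension:
  assumes "real_analytic f"
  obtains F \<Omega> where "open \<Omega>" "\<And>t. of_real t \<in> \<Omega>" "F holomorphic_on \<Omega>"
    "\<And>t. F (of_real t) = of_real (f t)"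
proof -
  have "\<forall>x. \<exists>r. 0 < r \<and> (\<exists>c. power_series_expansion f c x r)"
    using assms unfolding real_analytic_def power_series_expansion_def by blast
  then obtain r where r: "\<And>x. 0 < r x" and "\<forall>x. \<exists>c. power_series_expansion f c x (r x)"
    using choice[of "\<lambda>x r. 0 < r \<and> (\<exists>c. power_series_expansion f c x r)"] by blast
  then obtain c where c: "\<And>x. power_series_expansion f (c x) x (r x)"
    using choice[of "\<lambda>x c. power_series_expansion f c x (r x)"] by blast
  define \<Omega> where "\<Omega> = (\<Union>x. ball (complex_of_real x) (r x))"
  \<comment> \<open>expand around any centre whose disc contains \<open>z\<close>; by \<open>complex_powser_agree\<close> the choice is irrelevant\<close>
  define x\<^sub>z where "x\<^sub>z (z :: complex) = (SOME x. z \<in> ball (of_real x) (r x))" for z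
  define F where "F z = complex_powser (c (x\<^sub>z z)) (x\<^sub>z z) z" for z
  have F: "F z = complex_powser (c x) x z" if "z \<in> ball (of_real x) (r x)" for x z
  proof -
    have "z \<in> ball (of_real (x\<^sub>z z)) (r (x\<^sub>z z))"
      unfolding x\<^sub>z_def using that by (rule someI)
    then show ?thesis unfolding F_def using that by (intro complex_powser_agree[OF c c]) simp
  qed
  have hol: "F holomorphic_on ball (of_real x) (r x)" for x
    by (rule holomorphic_transform[OF power_series_expansion.complex_powser_holomorphic[OF c]])
       (rule F[symmetric])
  show ?thesis
  proof (rule that)
    show "open \<Omega>" unfolding \<Omega>_def by blast
    show "F holomorphic_on \<Omega>"
      unfolding \<Omega>_def by (intro holomorphic_on_UN_open hol) auto
    show "of_real t \<in> \<Omega>" for t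
      using r[of t] unfolding \<Omega>_def by (intro UN_I[of t]) auto
    show "F (of_real t) = of_real (f t)" for t
      using F[of "of_real t" t] power_series_expansion.complex_powser_of_real[OF c, of t t] r[of t]
      by simp
  qed
qed

section \<open>Exponential decay of the Fourier coefficients\<close>

lemma strip_subset_open:
  fixes \<Omega> :: "complex set"
  assumes "open \<Omega>" "\<And>t. of_real t \<in> \<Omega>"
  obtains \<delta> where "0 < \<delta>" "\<And>z. a \<le> Re z \<Longrightarrow> Re z \<le> b \<Longrightarrow> \<bar>Im z\<bar> < \<delta> \<Longrightarrow> z \<in> \<Omega>"
proof -
  have "compact (complex_of_real ` {a..b})"
    by (intro compact_continuous_image continuous_on_of_real) auto
  moreover have "complex_of_real ` {a..b} \<subseteq> \<Omega>" using assms(2) by blast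
  ultimately obtain \<delta> where \<delta>: "0 < \<delta>" "(\<Union>w\<in>complex_of_real ` {a..b}. ball w \<delta>) \<subseteq> \<Omega>"
    using compact_subset_open_imp_ball_epsilon_subset assms(1) by blast
  show ?thesis
  proof (rule that[OF \<delta>(1)])
    fix z :: complex assume z: "a \<le> Re z" "Re z \<le> b" "\<bar>Im z\<bar> < \<delta>"
    have "dist (of_real (Re z)) z = \<bar>Im z\<bar>" by (simp add: dist_norm cmod_def)
    then have "z \<in> ball (of_real (Re z)) \<delta>" using z(3) by simp
    moreover have "of_real (Re z) \<in> complex_of_real ` {a..b}" using z(1,2) by simp
    ultimately show "z \<in> \<Omega>" using \<delta>(2) by blast
  qed
qed

lemma holomorphic_extension_periodic:
  assumes "F holomorphic_on \<Omega>" "\<And>t. F (of_real t) = of_real (f t)" "\<And>t. f (t + 1) = f t"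
    and "ball 0 r \<subseteq> \<Omega>" "(\<lambda>z. z + 1) ` ball 0 r \<subseteq> \<Omega>" "z \<in> ball 0 r"
  shows "F (z + 1) = F z"
proof -
  have "(\<lambda>w. w + 1) holomorphic_on ball 0 r" by (intro holomorphic_intros)
  then have "(\<lambda>w. F (w + 1)) holomorphic_on ball 0 r"
    using holomorphic_on_compose_gen[of "\<lambda>w. w + 1" "ball 0 r" F \<Omega>] assms(1,5) by (simp add: o_def)
  then have "(\<lambda>w. F (w + 1) - F w) holomorphic_on ball 0 r"
    using holomorphic_on_subset[OF assms(1,4)] by (intro holomorphic_intros)
  moreover have "F (of_real t + 1) - F (of_real t) = 0" for t
    using assms(2,3)[of t] assms(2)[of "t + 1"] by simp
  moreover have "of_real 0 \<in> ball (0 :: complex) r"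
    using assms(6) norm_ge_zero[of z] by (simp only: mem_ball dist_0_norm of_real_0 norm_zero)
  ultimately have "F (z + 1) - F z = 0"
    using holomorphic_vanishing_on_reals[OF _ open_ball connected_ball _ _ assms(6)] by blast
  then show ?thesis by simp
qed

lemma has_contour_integral_linepath_translate:
  assumes "(g has_contour_integral I) (linepath a b)"
    and "\<And>z. z \<in> closed_segment a b \<Longrightarrow> g (z + s) = g z"
  shows "(g has_contour_integral I) (linepath (a + s) (b + s))"
proof -
  have eq: "g (linepath (a + s) (b + s) x) * (b + s - (a + s)) = g (linepath a b x) * (b - a)"
    if "x \<in> {0..1}" for x
  proof -
    have "linepath (a + s) (b + s) x = linepath a b x + s"
      by (simp add: linepath_def algebra_simps)
    then show ?thesis using assms(2)[OF linepath_in_path[OF that]] by simp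
  qed
  have "((\<lambda>x. g (linepath a b x) * (b - a)) has_integral I) {0..1}"
    using assms(1) unfolding has_contour_integral_linepath .
  then have "((\<lambda>x. g (linepath (a + s) (b + s) x) * (b + s - (a + s))) has_integral I) {0..1}"
    by (rule has_integral_eq[rotated]) (rule eq[symmetric])
  then show ?thesis unfolding has_contour_integral_linepath .
qed

lemma contour_integral_periodic_shift:
  fixes g :: "complex \<Rightarrow> complex"
  assumes hol: "g holomorphic_on W" and "convex W" and W: "0 \<in> W" "1 \<in> W" "p \<in> W" "p + 1 \<in> W"
    and periodic: "\<And>z. z \<in> closed_segment 0 p \<Longrightarrow> g (z + 1) = g z"
  shows "contour_integral (linepath 0 1) g = contour_integral (linepath p (p + 1)) g"
proof -
  have has_integral: "(g has_contour_integral contour_integral (linepath u v) g) (linepath u v)"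
    if "u \<in> W" "v \<in> W" for u v
    using continuous_on_subset[OF holomorphic_on_imp_continuous_on[OF hol]
        closed_segment_subset[OF that \<open>convex W\<close>]]
    by (intro has_contour_integral_integral contour_integrable_continuous_linepath)
  define I J\<^sub>0 J\<^sub>1 where "I = contour_integral (linepath 0 1) g"
    and "J\<^sub>0 = contour_integral (linepath 0 p) g" and "J\<^sub>1 = contour_integral (linepath p (p + 1)) g"
  \<comment> \<open>the two vertical sides of the rectangle cancel by periodicity\<close>
  have bottom: "(g has_contour_integral I) (linepath 0 1)"
    unfolding I_def by (rule has_integral[OF W(1,2)])
  have "(g has_contour_integral J\<^sub>0) (linepath (0 + 1) (p + 1))"
    unfolding J\<^sub>0_def
    by (rule has_contour_integral_linepath_translate[OF has_integral[OF W(1,3)]]) (rule periodic)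
  then have right: "(g has_contour_integral J\<^sub>0) (linepath 1 (p + 1))" by simp
  have top: "(g has_contour_integral - J\<^sub>1) (linepath (p + 1) p)"
    using has_contour_integral_reversepath[OF _ has_integral[OF W(3,4)]] by (simp add: J\<^sub>1_def)
  have left: "(g has_contour_integral - J\<^sub>0) (linepath p 0)"
    using has_contour_integral_reversepath[OF _ has_integral[OF W(1,3)]] by (simp add: J\<^sub>0_def)
  have "(g has_contour_integral (I + (J\<^sub>0 + (- J\<^sub>1 + - J\<^sub>0))))
      (linepath 0 1 +++ linepath 1 (p + 1) +++ linepath (p + 1) p +++ linepath p 0)"
    by (intro has_contour_integral_join bottom right top left valid_path_join valid_path_linepath)
       simp_all
  moreover have "(g has_contour_integral 0)
      (linepath 0 1 +++ linepath 1 (p + 1) +++ linepath (p + 1) p +++ linepath p 0)"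
  proof (rule Cauchy_theorem_convex_simple[OF hol \<open>convex W\<close>])
    have "closed_segment 0 1 \<subseteq> W" "closed_segment 1 (p + 1) \<subseteq> W"
      "closed_segment (p + 1) p \<subseteq> W" "closed_segment p 0 \<subseteq> W"
      by (simp_all add: closed_segment_subset W \<open>convex W\<close>)
    then show "path_image (linepath 0 1 +++ linepath 1 (p + 1) +++ linepath (p + 1) p +++ linepath p 0) \<subseteq> W"
      by (simp add: path_image_join)
  qed simp_all
  ultimately have "I + (J\<^sub>0 + (- J\<^sub>1 + - J\<^sub>0)) = 0" by (rule has_contour_integral_unique)
  then show ?thesis by (simp add: I_def J\<^sub>1_def)
qed

lemma exp_2pi_int_periodic:
  "exp (- (2 * pi * \<i> * of_int k) * (z + 1)) = exp (- (2 * pi * \<i> * of_int k) * z)"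
proof -
  have "exp (- (2 * pi * \<i> * of_int k)) = 1"
    using exp_integer_2pi[of "- of_int k"] by (simp add: algebra_simps)
  have "exp (- (2 * pi * \<i> * of_int k) * (z + 1))
      = exp (- (2 * pi * \<i> * of_int k) * z) * exp (- (2 * pi * \<i> * of_int k))"
    by (simp only: distrib_left mult_1_right exp_add)
  with \<open>exp (- (2 * pi * \<i> * of_int k)) = 1\<close> show ?thesis by simp
qed

lemma fourier_coeff_eq_contour_integral:
  assumes "\<And>t. F (of_real t) = of_real (f t)"
  shows "fourier_coeff f k = contour_integral (linepath 0 1) (\<lambda>z. F z * exp (- (2 * pi * \<i> * of_int k) * z))"
proof -
  have "F (of_real x) * exp (- (2 * pi * \<i> * of_int k) * of_real x)
      = of_real (f x) * cis (- 2 * pi * real_of_int k * x)" for x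
    by (simp add: assms cis_conv_exp algebra_simps)
  then show ?thesis
    by (simp add: contour_integral_linepath_Reals_eq fourier_coeff_def)
qed

lemma norm_fourier_coeff_le_shifted:
  assumes hol: "F holomorphic_on W" and "convex W" and W: "0 \<in> W" "1 \<in> W" "p \<in> W" "p + 1 \<in> W"
    and periodic: "\<And>z. z \<in> closed_segment 0 p \<Longrightarrow> F (z + 1) = F z"
    and real: "\<And>t. F (of_real t) = of_real (f t)"
    and "0 \<le> B" and bound: "\<And>z. z \<in> closed_segment p (p + 1) \<Longrightarrow> norm (F z) \<le> B"
  shows "norm (fourier_coeff f k) \<le> B * exp (2 * pi * of_int k * Im p)"
proof -
  define g where "g z = F z * exp (- (2 * pi * \<i> * of_int k) * z)" for z
  have hol_g: "g holomorphic_on W" unfolding g_def by (intro holomorphic_intros hol)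
  have "fourier_coeff f k = contour_integral (linepath p (p + 1)) g"
    unfolding fourier_coeff_eq_contour_integral[where F=F and f=f, OF real] g_def
    using periodic exp_2pi_int_periodic
    by (intro contour_integral_periodic_shift[OF hol_g[unfolded g_def] \<open>convex W\<close> W]) simp
  also have "norm \<dots> \<le> B * exp (2 * pi * of_int k * Im p) * norm (p + 1 - p)"
  proof (rule contour_integral_bound_linepath)
    have "closed_segment p (p + 1) \<subseteq> W" by (simp add: closed_segment_subset W \<open>convex W\<close>)
    then show "g contour_integrable_on linepath p (p + 1)"
      using continuous_on_subset[OF holomorphic_on_imp_continuous_on[OF hol_g]]
      by (intro contour_integrable_continuous_linepath)
    show "0 \<le> B * exp (2 * pi * of_int k * Im p)" using \<open>0 \<le> B\<close> by simp
    fix z assume z: "z \<in> closed_segment p (p + 1)"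
    then obtain u where "z = p + of_real u" by (auto simp: in_segment scaleR_conv_of_real algebra_simps)
    then have "Im z = Im p" by simp
    then show "norm (g z) \<le> B * exp (2 * pi * of_int k * Im p)"
      using bound[OF z] by (simp add: g_def norm_mult mult_right_mono)
  qed
  finally show ?thesis by simp
qed

lemma fourier_coeff_exponential_decay:
  assumes "periodic1 f" "open \<Omega>" "\<And>t. of_real t \<in> \<Omega>" "F holomorphic_on \<Omega>"
    and real: "\<And>t. F (of_real t) = of_real (f t)"
  obtains B q where "0 < q" "q < 1" "\<And>k::nat. norm (fourier_coeff f (int k)) \<le> B * q ^ k"
proof -
  obtain \<delta> where \<delta>: "0 < \<delta>" "\<And>z. -1 \<le> Re z \<Longrightarrow> Re z \<le> 2 \<Longrightarrow> \<bar>Im z\<bar> < \<delta> \<Longrightarrow> z \<in> \<Omega>"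
    using strip_subset_open[OF assms(2,3)] by blast
  define \<epsilon> where "\<epsilon> = min \<delta> 1"
  define p where "p = - \<i> * of_real (\<epsilon> / 2)"
  define W where "W = {z. -1 < Re z} \<inter> {z. Re z < 2} \<inter> {z. Im z < \<epsilon>} \<inter> {z. - \<epsilon> < Im z}"
  have \<epsilon>: "0 < \<epsilon>" "\<epsilon> \<le> 1" "\<epsilon> \<le> \<delta>" using \<delta>(1) by (auto simp: \<epsilon>_def)
  have "convex W" unfolding W_def
    by (intro convex_Int convex_halfspace_Re_gt convex_halfspace_Re_lt convex_halfspace_Im_lt
        convex_halfspace_Im_gt)
  have "W \<subseteq> \<Omega>" using \<delta>(2) \<epsilon> by (force simp: W_def)
  then have hol: "F holomorphic_on W" using assms(4) by (rule holomorphic_on_subset[rotated])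
  have W: "0 \<in> W" "1 \<in> W" "p \<in> W" "p + 1 \<in> W" using \<epsilon> by (auto simp: W_def p_def)
  have "w \<in> \<Omega>" "w + 1 \<in> \<Omega>" if "w \<in> ball 0 \<epsilon>" for w
  proof -
    have "\<bar>Re w\<bar> < \<epsilon>" "\<bar>Im w\<bar> < \<epsilon>" using that abs_Re_le_cmod[of w] abs_Im_le_cmod[of w] by auto
    then show "w \<in> \<Omega>" "w + 1 \<in> \<Omega>" using \<epsilon> by (auto intro!: \<delta>(2))
  qed
  then have ball_\<Omega>: "ball 0 \<epsilon> \<subseteq> \<Omega>" "(\<lambda>z. z + 1) ` ball 0 \<epsilon> \<subseteq> \<Omega>" by auto
  have "closed_segment 0 p \<subseteq> ball 0 \<epsilon>"
    using \<epsilon> by (intro closed_segment_subset) (auto simp: p_def norm_mult)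
  then have periodic: "F (z + 1) = F z" if "z \<in> closed_segment 0 p" for z
    using holomorphic_extension_periodic[OF assms(4) real _ ball_\<Omega>] that \<open>periodic1 f\<close>
    by (auto simp: periodic1_def)
  obtain B where "0 \<le> B" and B: "\<And>z. z \<in> closed_segment p (p + 1) \<Longrightarrow> norm (F z) \<le> B"
    by (rule continuous_on_compact_bound[OF compact_segment continuous_on_subset[OF
        holomorphic_on_imp_continuous_on[OF hol] closed_segment_subset[OF W(3,4) \<open>convex W\<close>]]])
       blast
  show ?thesis
  proof (rule that)
    show "0 < exp (- pi * \<epsilon>)" "exp (- pi * \<epsilon>) < 1" using \<epsilon> by auto
    fix k :: nat
    have "norm (fourier_coeff f (int k)) \<le> B * exp (2 * pi * of_int (int k) * Im p)"
      by (rule norm_fourier_coeff_le_shifted[OF hol \<open>convex W\<close> W periodic real \<open>0 \<le> B\<close> B])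
    also have "exp (2 * pi * of_int (int k) * Im p) = exp (- pi * \<epsilon>) ^ k"
      by (simp add: p_def flip: exp_of_nat_mult)
    finally show "norm (fourier_coeff f (int k)) \<le> B * exp (- pi * \<epsilon>) ^ k" .
  qed
qed

section \<open>Uniqueness of Fourier coefficients\<close>

inductive_set trig_polys :: "(real \<Rightarrow> complex) set" where
  monomial: "(\<lambda>t. a * cis (2 * pi * of_int m * t)) \<in> trig_polys"
| add: "p \<in> trig_polys \<Longrightarrow> q \<in> trig_polys \<Longrightarrow> (\<lambda>t. p t + q t) \<in> trig_polys"

lemma trig_polys_mult_monomial:
  assumes "p \<in> trig_polys"
  shows "(\<lambda>t. p t * (b * cis (2 * pi * of_int n * t))) \<in> trig_polys"
  using assms
proof induction
  case (monomial a m)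
  have "(\<lambda>t. a * cis (2 * pi * of_int m * t) * (b * cis (2 * pi * of_int n * t))) =
        (\<lambda>t. (a * b) * cis (2 * pi * of_int (m + n) * t))"
    by (auto simp: cis_mult algebra_simps)
  then show ?case by (simp only: trig_polys.monomial)
next
  case (add p q)
  then show ?case by (simp add: distrib_right trig_polys.add)
qed

lemma trig_polys_mult:
  assumes "p \<in> trig_polys" "q \<in> trig_polys"
  shows "(\<lambda>t. p t * q t) \<in> trig_polys"
  using assms(2)
proof induction
  case (monomial a m)
  then show ?case by (rule trig_polys_mult_monomial[OF assms(1)])
next
  case (add q\<^sub>1 q\<^sub>2)
  then show ?case by (simp add: distrib_left trig_polys.add)
qed

lemma trig_polys_const: "(\<lambda>t. a) \<in> trig_polys"
  using trig_polys.monomial[of a 0] by simp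

lemma trig_polys_cos_sin:
  "(\<lambda>t. complex_of_real (cos (2 * pi * t))) \<in> trig_polys"
  "(\<lambda>t. complex_of_real (sin (2 * pi * t))) \<in> trig_polys"
proof -
  have "(\<lambda>t. complex_of_real (cos (2 * pi * t))) =
        (\<lambda>t. (1/2) * cis (2 * pi * of_int 1 * t) + (1/2) * cis (2 * pi * of_int (-1) * t))"
       "(\<lambda>t. complex_of_real (sin (2 * pi * t))) =
        (\<lambda>t. (- \<i>/2) * cis (2 * pi * of_int 1 * t) + (\<i>/2) * cis (2 * pi * of_int (-1) * t))"
    by (auto simp: complex_eq_iff)
  then show "(\<lambda>t. complex_of_real (cos (2 * pi * t))) \<in> trig_polys"
    "(\<lambda>t. complex_of_real (sin (2 * pi * t))) \<in> trig_polys"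
    by (simp_all only: trig_polys.intros)
qed

lemma real_polynomial_function_cis_in_trig_polys:
  assumes "real_polynomial_function q"
  shows "(\<lambda>t. complex_of_real (q (cis (2 * pi * t)))) \<in> trig_polys"
  using assms
proof induction
  case (linear q)
  then interpret bounded_linear q .
  have "q (cis (2 * pi * t)) = cos (2 * pi * t) * q 1 + sin (2 * pi * t) * q \<i>" for t
  proof -
    have "cis (2 * pi * t) = cos (2 * pi * t) *\<^sub>R 1 + sin (2 * pi * t) *\<^sub>R \<i>"
      by (simp add: complex_eq_iff)
    then have "q (cis (2 * pi * t)) = q (cos (2 * pi * t) *\<^sub>R 1 + sin (2 * pi * t) *\<^sub>R \<i>)"
      by (rule arg_cong)
    then show ?thesis by (simp add: add scaleR)
  qed
  then have "(\<lambda>t. complex_of_real (q (cis (2 * pi * t)))) =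
      (\<lambda>t. of_real (q 1) * of_real (cos (2 * pi * t)) + of_real (q \<i>) * of_real (sin (2 * pi * t)))"
    by (simp add: mult.commute)
  then show ?case
    using trig_polys_mult[OF trig_polys_const] trig_polys_cos_sin by (simp add: trig_polys.add)
next
  case (const c)
  then show ?case by (rule trig_polys_const)
next
  case (add q\<^sub>1 q\<^sub>2)
  then show ?case by (simp add: trig_polys.add)
next
  case (mult q\<^sub>1 q\<^sub>2)
  then show ?case by (simp add: trig_polys_mult)
qed

lemma polynomial_function_cis_in_trig_polys:
  assumes "polynomial_function p"
  shows "(\<lambda>t. p (cis (2 * pi * t))) \<in> trig_polys"
proof -
  have "real_polynomial_function (\<lambda>z. Re (p z))" "real_polynomial_function (\<lambda>z. Im (p z))"
    using assms bounded_linear_Re bounded_linear_Im unfolding polynomial_function_def o_def by blast+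
  then have "(\<lambda>t. of_real (Re (p (cis (2 * pi * t)))) + \<i> * of_real (Im (p (cis (2 * pi * t))))) \<in> trig_polys"
    using real_polynomial_function_cis_in_trig_polys trig_polys_mult[OF trig_polys_const]
    by (intro trig_polys.add) auto
  moreover have "(\<lambda>t. of_real (Re (p (cis (2 * pi * t)))) + \<i> * of_real (Im (p (cis (2 * pi * t)))))
      = (\<lambda>t. p (cis (2 * pi * t)))"
    by (auto simp: complex_eq_iff)
  ultimately show ?thesis by simp
qed

lemma trig_polys_continuous: "q \<in> trig_polys \<Longrightarrow> continuous_on S q"
proof (induction rule: trig_polys.induct)
  case (monomial a m)
  show ?case by (intro continuous_intros)
next
  case (add p q)
  show ?case using add.IH by (rule continuous_on_add)
qed

lemma integral_mult_trig_polys_eq_0: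
  fixes H :: "real \<Rightarrow> complex"
  assumes cont: "continuous_on {0..1} H"
    and orth: "\<And>m::int. integral {0..1} (\<lambda>t. H t * cis (2 * pi * of_int m * t)) = 0"
    and "q \<in> trig_polys"
  shows "integral {0..1} (\<lambda>t. H t * q t) = 0"
  using \<open>q \<in> trig_polys\<close>
proof induction
  case (monomial a m)
  have "(\<lambda>t. H t * (a * cis (2 * pi * of_int m * t))) = (\<lambda>t. a * (H t * cis (2 * pi * of_int m * t)))"
    by (simp add: ac_simps)
  then show ?case using orth[of m] by simp
next
  case (add p q)
  have "(\<lambda>t. H t * r t) integrable_on {0..1}" if "r \<in> trig_polys" for r
    using continuous_on_mult[OF cont trig_polys_continuous[OF that]]
    by (rule integrable_continuous_interval)
  then show ?case using add by (simp add: distrib_left integral_add)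
qed

lemma Arg2pi_cis_2pi: "0 \<le> t \<Longrightarrow> t < 1 \<Longrightarrow> Arg2pi (cis (2 * pi * t)) = 2 * pi * t"
  by (rule Arg2pi_unique[of 1]) (auto simp: cis_conv_exp)

lemma cis_2pi_image: "(\<lambda>t. cis (2 * pi * t)) ` {0..1} = sphere 0 1"
proof
  show "sphere 0 1 \<subseteq> (\<lambda>t. cis (2 * pi * t)) ` {0..1}"
  proof
    fix z :: complex assume "z \<in> sphere 0 1"
    then have "cis (2 * pi * (Arg2pi z / (2 * pi))) = z"
      by (simp add: cis_conv_exp complex_norm_eq_1_exp)
    moreover have "Arg2pi z / (2 * pi) \<in> {0..1}"
      using Arg2pi_ge_0[of z] Arg2pi_lt_2pi[of z] by auto
    ultimately show "z \<in> (\<lambda>t. cis (2 * pi * t)) ` {0..1}" by force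
  qed
qed auto

lemma circle_lift_cis:
  assumes "H 0 = H 1" "t \<in> {0..1}"
  shows "H (Arg2pi (cis (2 * pi * t)) / (2 * pi)) = H t"
proof (cases "t = 1")
  case True
  have "Arg2pi 1 = 0" by (rule Arg2pi_unique[of 1]) auto
  then show ?thesis using True assms(1) by simp
qed (use assms(2) Arg2pi_cis_2pi in auto)

lemma continuous_on_circle_lift:
  fixes H :: "real \<Rightarrow> 'a::topological_space"
  assumes cont: "continuous_on {0..1} H" and "H 0 = H 1"
  shows "continuous_on (sphere 0 1) (\<lambda>z. H (Arg2pi z / (2 * pi)))"
  unfolding continuous_openin_preimage_eq
proof (intro allI impI)
  define E where "E t = cis (2 * pi * t)" for t
  let ?G = "\<lambda>z. H (Arg2pi z / (2 * pi))"
  fix V :: "'a set" assume "open V"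
  define U where "U = sphere 0 1 \<inter> ?G -` V"
  \<comment> \<open>\<open>E\<close> is a quotient map from \<open>[0,1]\<close> onto the circle, since \<open>[0,1]\<close> is compact\<close>
  have "{0..1} \<inter> E -` U = {0..1} \<inter> H -` V"
    using circle_lift_cis[OF assms(2)] by (auto simp: U_def E_def)
  moreover have "openin (top_of_set {0..1}) ({0..1} \<inter> H -` V)"
    using cont \<open>open V\<close> unfolding continuous_openin_preimage_eq by blast
  moreover have "continuous_on {0..1} E" unfolding E_def by (intro continuous_intros)
  ultimately show "openin (top_of_set (sphere 0 1)) (sphere 0 1 \<inter> ?G -` V)"
    using Abstract_Topology_2.continuous_imp_quotient_map[of "{0..1}" E "sphere 0 1" U]
      cis_2pi_image by (simp add: U_def E_def)
qed

lemma integral_norm_square_eq_0_if_orthogonal: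
  fixes H :: "real \<Rightarrow> complex"
  assumes cont: "continuous_on {0..1} H" and "H 0 = H 1"
    and orth: "\<And>m::int. integral {0..1} (\<lambda>t. H t * cis (2 * pi * of_int m * t)) = 0"
  shows "integral {0..1} (\<lambda>t. (norm (H t))\<^sup>2) = 0"
proof -
  define G where "G z = cnj (H (Arg2pi z / (2 * pi)))" for z
  have G_cis: "G (cis (2 * pi * t)) = cnj (H t)" if "t \<in> {0..1}" for t
    using circle_lift_cis[of "\<lambda>t. cnj (H t)", OF _ that] \<open>H 0 = H 1\<close> by (simp add: G_def)
  have cont_G: "continuous_on (sphere 0 1) G"
    unfolding G_def using \<open>H 0 = H 1\<close>
    by (intro continuous_on_circle_lift[of "\<lambda>t. cnj (H t)"] continuous_on_cnj cont) simp
  obtain M where M: "0 < M" "\<And>t. t \<in> {0..1} \<Longrightarrow> norm (H t) \<le> M"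
    using compact_continuous_image[OF cont compact_Icc] compact_imp_bounded bounded_pos
    by (metis image_eqI)
  have I: "((\<lambda>t. (norm (H t))\<^sup>2) has_integral integral {0..1} (\<lambda>t. (norm (H t))\<^sup>2)) {0..1}"
    using cont by (intro integrable_integral integrable_continuous_interval continuous_intros)
  \<comment> \<open>approximate \<open>cnj \<circ> H\<close> uniformly by a trigonometric polynomial, to which \<open>H\<close> is orthogonal\<close>
  have small: "\<bar>integral {0..1} (\<lambda>t. (norm (H t))\<^sup>2)\<bar> \<le> M * e" if "0 < e" for e
  proof -
    obtain p where p: "polynomial_function p" "\<And>z. z \<in> sphere 0 1 \<Longrightarrow> norm (G z - p z) < e"
      using Stone_Weierstrass_polynomial_function[OF compact_sphere cont_G \<open>0 < e\<close>] by blast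
    let ?q = "\<lambda>t. p (cis (2 * pi * t))"
    have q: "?q \<in> trig_polys" by (rule polynomial_function_cis_in_trig_polys[OF p(1)])
    have cont_q: "continuous_on {0..1} ?q" by (rule trig_polys_continuous[OF q])
    have cont_diff: "continuous_on {0..1} (\<lambda>t. H t * (cnj (H t) - ?q t))"
      by (intro continuous_on_mult continuous_on_diff continuous_on_cnj cont cont_q)
    have "integral {0..1} (\<lambda>t. H t * cnj (H t))
        = integral {0..1} (\<lambda>t. H t * (cnj (H t) - ?q t) + H t * ?q t)"
      by (simp add: algebra_simps)
    also have "\<dots> = integral {0..1} (\<lambda>t. H t * (cnj (H t) - ?q t))"
      using integral_mult_trig_polys_eq_0[OF cont orth q] continuous_on_mult[OF cont cont_q] cont_diff
      by (simp add: integral_add integrable_continuous_interval)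
    also have "norm \<dots> \<le> (M * e) * (1 - 0)"
    proof (rule integral_bound[OF _ cont_diff])
      fix t :: real assume t: "t \<in> {0..1}"
      have "norm (H t * (cnj (H t) - ?q t)) = norm (H t) * norm (G (cis (2 * pi * t)) - ?q t)"
        by (simp add: G_cis[OF t] norm_mult)
      also have "\<dots> \<le> M * e"
        using M p(2)[of "cis (2 * pi * t)"] t by (intro mult_mono) auto
      finally show "norm (H t * (cnj (H t) - ?q t)) \<le> M * e" .
    qed simp
    finally have "norm (integral {0..1} (\<lambda>t. H t * cnj (H t))) \<le> M * e" by simp
    moreover have "integral {0..1} (\<lambda>t. H t * cnj (H t)) = of_real (integral {0..1} (\<lambda>t. (norm (H t))\<^sup>2))"
      unfolding complex_norm_square[symmetric] by (rule integral_unique[OF has_integral_of_real[OF I]])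
    ultimately show ?thesis by simp
  qed
  have "\<bar>integral {0..1} (\<lambda>t. (norm (H t))\<^sup>2)\<bar> \<le> 0 + e" if "0 < e" for e
    using small[of "e / M"] M(1) that by simp
  then have "\<bar>integral {0..1} (\<lambda>t. (norm (H t))\<^sup>2)\<bar> \<le> 0" by (rule field_le_epsilon)
  then show ?thesis by simp
qed

lemma fourier_uniqueness:
  fixes H :: "real \<Rightarrow> complex"
  assumes cont: "continuous_on {0..1} H" and "H 0 = H 1"
    and "\<And>m::int. integral {0..1} (\<lambda>t. H t * cis (2 * pi * of_int m * t)) = 0"
    and "x \<in> {0..1}"
  shows "H x = 0"
proof -
  have cont_sq: "continuous_on {0..1} (\<lambda>t. (norm (H t))\<^sup>2)"
    using cont by (intro continuous_intros)
  have "((\<lambda>t. (norm (H t))\<^sup>2) has_integral 0) (cbox 0 1)"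
    using integral_norm_square_eq_0_if_orthogonal[OF assms(1-3)] integrable_continuous_interval[OF cont_sq]
    by (metis box_real(2) has_integral_integral)
  then have "(norm (H x))\<^sup>2 = 0"
    using cont_sq assms(4) by (intro has_integral_0_cbox_imp_0) auto
  then show ?thesis by simp
qed

lemma integral_cis_2pi_int:
  "integral {0..1} (\<lambda>t. cis (2 * pi * of_int j * t)) = (if j = 0 then 1 else 0)"
proof (cases "j = 0")
  case False
  define c where "c = \<i> * complex_of_real (2 * pi * of_int j)"
  have cis_eq: "cis (2 * pi * of_int j * t) = exp (t *\<^sub>R c)" for t
    by (simp add: c_def cis_conv_exp scaleR_conv_of_real algebra_simps)
  have "((\<lambda>t. exp (t *\<^sub>R c) * c) has_integral (exp (1 *\<^sub>R c) - exp (0 *\<^sub>R c))) {0..1}"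
    by (rule fundamental_theorem_of_calculus) (auto intro: exp_scaleR_has_vector_derivative_right)
  moreover have "exp (1 *\<^sub>R c) = 1"
    using cis_eq[of 1] cis_multiple_2pi[of "of_int j"] by simp
  ultimately have "integral {0..1} (\<lambda>t. exp (t *\<^sub>R c)) * c = 0"
    by (simp add: integral_unique flip: integral_mult_left)
  then show ?thesis using False by (simp add: cis_eq c_def)
qed simp

lemma integral_trig_sum_mult_cis:
  assumes "finite K"
  shows "integral {0..1} (\<lambda>t. (\<Sum>k\<in>K. c k * cis (2 * pi * of_int k * t)) * cis (2 * pi * of_int m * t))
    = (if - m \<in> K then c (- m) else 0)"
proof -
  have monomial_integral: "integral {0..1} (\<lambda>t. c k * cis (2 * pi * of_int k * t) * cis (2 * pi * of_int m * t))
      = (if k = - m then c k else 0)" for k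
  proof -
    have eq: "(\<lambda>t. c k * cis (2 * pi * of_int k * t) * cis (2 * pi * of_int m * t))
        = (\<lambda>t. c k * cis (2 * pi * of_int (k + m) * t))"
      by (simp add: cis_mult algebra_simps)
    show ?thesis unfolding eq integral_mult_right integral_cis_2pi_int by auto
  qed
  have "integral {0..1} (\<lambda>t. (\<Sum>k\<in>K. c k * cis (2 * pi * of_int k * t)) * cis (2 * pi * of_int m * t))
      = (\<Sum>k\<in>K. integral {0..1} (\<lambda>t. c k * cis (2 * pi * of_int k * t) * cis (2 * pi * of_int m * t)))"
    unfolding sum_distrib_right
    by (intro integral_sum assms integrable_continuous_interval continuous_intros)
  also have "\<dots> = (\<Sum>k\<in>K. if k = - m then c k else 0)" by (simp only: monomial_integral)
  also have "\<dots> = (if - m \<in> K then c (- m) else 0)" using assms by simp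
  finally show ?thesis .
qed

lemma fourier_coeff_uminus: "fourier_coeff f (- m) = cnj (fourier_coeff f m)"
  unfolding fourier_coeff_def by (simp add: integral_cnj cis_cnj)

lemma periodic_vanishing_on_unit_interval:
  fixes H :: "real \<Rightarrow> 'a :: zero"
  assumes "\<And>t. H (t + 1) = H t" "\<And>t. t \<in> {0..1} \<Longrightarrow> H t = 0"
  shows "H t = 0"
proof -
  interpret periodic_fun_simple' H by standard (rule assms(1))
  have "t - of_int \<lfloor>t\<rfloor> \<in> {0..1}" unfolding atLeastAtMost_iff by linarith
  then show ?thesis using assms(2) plus_of_int[of "t - of_int \<lfloor>t\<rfloor>" "\<lfloor>t\<rfloor>"] by simp
qed

lemma fourier_sum_eq_if_coeffs_vanish:
  assumes "periodic1 f" "continuous_on UNIV f"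
    and vanish: "\<And>m. m \<notin> {- int N..int N} \<Longrightarrow> fourier_coeff f m = 0"
  shows "complex_of_real (f t) = (\<Sum>k\<in>{- int N..int N}. fourier_coeff f k * cis (2 * pi * of_int k * t))"
proof -
  define P where "P t = (\<Sum>k\<in>{- int N..int N}. fourier_coeff f k * cis (2 * pi * of_int k * t))" for t
  define H where "H t = complex_of_real (f t) - P t" for t
  have cont: "continuous_on S H" for S
    using continuous_on_subset[OF assms(2)] unfolding H_def P_def by (intro continuous_intros) auto
  have periodic: "H (t + 1) = H t" for t
  proof -
    have "cis (2 * pi * of_int k * (t + 1)) = cis (2 * pi * of_int k * t)" for k :: int
    proof -
      have "cis (2 * pi * of_int k * (t + 1)) = cis (2 * pi * of_int k * t) * cis (2 * pi * of_int k)"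
        by (simp add: cis_mult algebra_simps)
      then show ?thesis using cis_multiple_2pi[of "of_int k"] by simp
    qed
    then show ?thesis using assms(1) by (simp add: H_def P_def periodic1_def)
  qed
  have "integral {0..1} (\<lambda>t. H t * cis (2 * pi * of_int m * t)) = 0" for m :: int
  proof -
    have "integral {0..1} (\<lambda>t. complex_of_real (f t) * cis (2 * pi * of_int m * t)) = fourier_coeff f (- m)"
      by (simp add: fourier_coeff_def)
    moreover have "integral {0..1} (\<lambda>t. P t * cis (2 * pi * of_int m * t)) = fourier_coeff f (- m)"
      using vanish[of "- m"] unfolding P_def by (simp add: integral_trig_sum_mult_cis)
    moreover have integrable: "(\<lambda>t. g t * cis (2 * pi * of_int m * t)) integrable_on {0..1}"
      if "continuous_on {0..1} g" for g
      using that by (intro integrable_continuous_interval continuous_on_mult continuous_intros)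
    moreover have "continuous_on {0..1} (\<lambda>t. complex_of_real (f t))" "continuous_on {0..1} P"
      using continuous_on_subset[OF assms(2)] unfolding P_def by (intro continuous_intros; simp)+
    ultimately show ?thesis
      unfolding H_def left_diff_distrib by (simp add: integral_diff)
  qed
  then have "H t = 0" if "t \<in> {0..1}" for t
    using fourier_uniqueness[OF cont _ _ that] periodic[of 0] by simp
  then have "H t = 0" using periodic_vanishing_on_unit_interval[where H = H, OF periodic] by blast
  then show ?thesis by (simp add: H_def P_def)
qed

lemma fourier_coeff_frequently_nonzero:
  assumes "periodic1 f" "continuous_on UNIV f" "\<not> trig_poly f"
  shows "\<exists>k>N. fourier_coeff f (int k) \<noteq> 0"
proof (rule ccontr)
  assume "\<not> (\<exists>k>N. fourier_coeff f (int k) \<noteq> 0)"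
  then have "fourier_coeff f m = 0" if "m \<notin> {- int N..int N}" for m
    using that fourier_coeff_uminus[of f m] by (cases m rule: int_cases2) auto
  then have "trig_poly f" unfolding trig_poly_def
    by (intro exI[of _ N] exI[of _ "fourier_coeff f"] allI fourier_sum_eq_if_coeffs_vanish[OF assms(1,2)])
  with assms(3) show False by simp
qed

theorem lemma5p2:
  fixes f :: "real \<Rightarrow> real"
  assumes "periodic1 f"
    and "real_analytic f"
    and "\<not> trig_poly f"
  shows "\<exists>l :: nat \<Rightarrow> nat. strict_mono l \<and> (\<forall>k. l k > 0) \<and>
           (\<forall>M::real. eventually (\<lambda>k. M * T_sum f (l k) < norm (fourier_coeff f (int (l k)))) sequentially)"
proof -
  obtain F \<Omega> where ext: "open \<Omega>" "\<And>t. of_real t \<in> \<Omega>" "F holomorphic_on \<Omega>"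
    "\<And>t. F (of_real t) = of_real (f t)"
    by (rule real_analytic_holomorphic_extension[OF assms(2)]) blast
  obtain B q where decay: "0 < q" "q < 1" "\<And>k::nat. norm (fourier_coeff f (int k)) \<le> B * q ^ k"
    by (rule fourier_coeff_exponential_decay[OF assms(1) ext]) blast
  have "continuous_on UNIV (\<lambda>t. F (of_real t))"
    using ext(2) by (intro continuous_on_compose2[OF holomorphic_on_imp_continuous_on[OF ext(3)]
        continuous_on_of_real]) auto
  then have "continuous_on UNIV (\<lambda>t. Re (F (of_real t)))" by (rule continuous_on_Re)
  then have "continuous_on UNIV f" using ext(4) by simp
  then have nonzero: "\<And>N. \<exists>k>N. norm (fourier_coeff f (int k)) \<noteq> 0"
    using fourier_coeff_frequently_nonzero[OF assms(1) _ assms(3)] by simp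
  have "\<exists>n\<ge>N. 0 < n \<and> M * T_sum f n < norm (fourier_coeff f (int n)) \<and> 0 \<le> T_sum f n" for M N
    using exists_index_dominating_multiples[OF _ decay(3,1,2) nonzero]
    by (simp add: T_sum_def weighted_multiples_sum_def)
  then show ?thesis by (rule exists_subseq_dominating)
qed

end
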